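(* Let $W$ be a finite Weyl group with affine Weyl group $\tilde W=W\ltimes Z$. Let $X$ be a conjugacy class of involutions in $\tilde W$ that contains $(a,\mathbf 0)$ for some involution $a$ of $W$, and let $\hat X$ be the conjugacy class of $a$ in $W$. Suppose that $\mathcal{C}(W,\hat X)$ is connected with diameter $d$, and that there is an integer $k$ such that whenever $(a,\mathbf u)\in X$, there is some $\hat x\in\hat X$ such that $d((a,\mathbf u),(\hat x,\mathbf 0))\le k$ in $\mathcal{C}(\tilde W,X)$. Then $\mathcal{C}(\tilde W,X)$ is connected with diameter at most $d+k$.
   Context: $W$ is a finite Weyl group with root system $\Phi$ in a Euclidean space $V$, and $Z$ is the coroot lattice $L(\Phi^\vee)$ (with $\alpha^\vee=2\alpha/\langle\alpha,\alpha\rangle$) viewed as translations. $\tilde W$ consists of pairs $(a,\mathbf u)$, $a\in W$, $\mathbf u\in Z$, with multiplication $(a,\mathbf u)(b,\mathbf v)=(ab,\mathbf u^b+\mathbf v)$, where $\mathbf u\mapsto\mathbf u^b$ is the (right) linear action of $W$ on $V$. $\mathcal{C}(G,X)$ is the graph on a set $X$ of involutions of $G$ with $x,y$ adjacent iff they commute; $d$ denotes graph distance and the diameter is the maximal distance between vertices. *)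

theory Defs
  imports "HOL-Analysis.Analysis" "HOL-Library.Extended_Nat"
begin

definition refl :: "'v::euclidean_space \<Rightarrow> 'v \<Rightarrow> 'v" where
  "refl \<alpha> v = v - ((2 * (v \<bullet> \<alpha>)) / (\<alpha> \<bullet> \<alpha>)) *\<^sub>R \<alpha>"

definition coroot :: "'v::euclidean_space \<Rightarrow> 'v" where
  "coroot \<alpha> = (2 / (\<alpha> \<bullet> \<alpha>)) *\<^sub>R \<alpha>"

definition root_system :: "'v::euclidean_space set \<Rightarrow> bool" where
  "root_system \<Phi> \<longleftrightarrow>
     finite \<Phi> \<and> 0 \<notin> \<Phi> \<and> span \<Phi> = UNIV \<and>
     (\<forall>\<alpha>\<in>\<Phi>. \<forall>c::real. c *\<^sub>R \<alpha> \<in> \<Phi> \<longleftrightarrow> c = 1 \<or> c = -1) \<and>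
     (\<forall>\<alpha>\<in>\<Phi>. \<forall>\<beta>\<in>\<Phi>. refl \<alpha> \<beta> \<in> \<Phi>) \<and>
     (\<forall>\<alpha>\<in>\<Phi>. \<forall>\<beta>\<in>\<Phi>. (2 * (\<beta> \<bullet> \<alpha>)) / (\<alpha> \<bullet> \<alpha>) \<in> \<int>)"

inductive_set weyl_group :: "'v::euclidean_space set \<Rightarrow> ('v \<Rightarrow> 'v) set" for \<Phi> where
  id: "id \<in> weyl_group \<Phi>"
| step: "s \<in> weyl_group \<Phi> \<Longrightarrow> \<alpha> \<in> \<Phi> \<Longrightarrow> refl \<alpha> \<circ> s \<in> weyl_group \<Phi>"

text \<open>Product in W, written so that the action u \<mapsto> u^b := b u is a right action:
  u^(ab) = (u^a)^b.\<close>
definition wmult :: "('v \<Rightarrow> 'v) \<Rightarrow> ('v \<Rightarrow> 'v) \<Rightarrow> ('v \<Rightarrow> 'v)" where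
  "wmult a b = b \<circ> a"

definition coroot_lattice :: "'v::euclidean_space set \<Rightarrow> 'v set" where
  "coroot_lattice \<Phi> = {v. \<exists>c::'v \<Rightarrow> int. v = (\<Sum>\<alpha>\<in>\<Phi>. of_int (c \<alpha>) *\<^sub>R coroot \<alpha>)}"

definition aff_weyl :: "'v::euclidean_space set \<Rightarrow> (('v \<Rightarrow> 'v) \<times> 'v) set" where
  "aff_weyl \<Phi> = weyl_group \<Phi> \<times> coroot_lattice \<Phi>"

definition amult :: "(('v::euclidean_space \<Rightarrow> 'v) \<times> 'v) \<Rightarrow> (('v \<Rightarrow> 'v) \<times> 'v) \<Rightarrow> (('v \<Rightarrow> 'v) \<times> 'v)" where
  "amult x y = (wmult (fst x) (fst y), fst y (snd x) + snd y)"

definition involution :: "'g set \<Rightarrow> ('g \<Rightarrow> 'g \<Rightarrow> 'g) \<Rightarrow> 'g \<Rightarrow> 'g \<Rightarrow> bool" where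
  "involution G m e x \<longleftrightarrow> x \<in> G \<and> x \<noteq> e \<and> m x x = e"

text \<open>Conjugacy class of x in G: all g^-1 x g, i.e. y with g y = x g.\<close>
definition conj_class :: "'g set \<Rightarrow> ('g \<Rightarrow> 'g \<Rightarrow> 'g) \<Rightarrow> 'g \<Rightarrow> 'g set" where
  "conj_class G m x = {y \<in> G. \<exists>g\<in>G. m g y = m x g}"

definition cg_walk :: "('g \<Rightarrow> 'g \<Rightarrow> 'g) \<Rightarrow> 'g set \<Rightarrow> 'g \<Rightarrow> 'g \<Rightarrow> nat \<Rightarrow> bool" where
  "cg_walk m X x y n \<longleftrightarrow> (\<exists>xs. length xs = Suc n \<and> set xs \<subseteq> X \<and> hd xs = x \<and> last xs = y \<and>
      (\<forall>i<n. m (xs ! i) (xs ! Suc i) = m (xs ! Suc i) (xs ! i)))"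

definition cg_dist :: "('g \<Rightarrow> 'g \<Rightarrow> 'g) \<Rightarrow> 'g set \<Rightarrow> 'g \<Rightarrow> 'g \<Rightarrow> enat" where
  "cg_dist m X x y = (INF n\<in>{n. cg_walk m X x y n}. enat n)"

definition cg_connected :: "('g \<Rightarrow> 'g \<Rightarrow> 'g) \<Rightarrow> 'g set \<Rightarrow> bool" where
  "cg_connected m X \<longleftrightarrow> (\<forall>x\<in>X. \<forall>y\<in>X. cg_dist m X x y \<noteq> \<infinity>)"

definition cg_diameter :: "('g \<Rightarrow> 'g \<Rightarrow> 'g) \<Rightarrow> 'g set \<Rightarrow> enat" where
  "cg_diameter m X = (SUP x\<in>X. SUP y\<in>X. cg_dist m X x y)"

end

theory Submission
  imports Defs "HOL-Algebra.Group"
begin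

text \<open>Conjugation by an element of the affine Weyl group is an automorphism of the commuting
  involution graph on the conjugacy class \<open>X\<close> and acts transitively on \<open>X\<close>, so it suffices to
  bound the distance from every vertex to \<open>(a, 0)\<close>. For a vertex \<open>z = (b, u)\<close> we have
  \<open>b \<in> Xh\<close> because \<open>fst\<close> is a homomorphism onto \<open>W\<close>, so conjugating by a suitable \<open>(s, 0)\<close>
  moves \<open>z\<close> to some \<open>(a, u')\<close>, which by hypothesis is within \<open>k\<close> of some \<open>(xh, 0)\<close>.
  Conjugating back, \<open>z\<close> is within \<open>k\<close> of \<open>(c, 0)\<close> for some \<open>c \<in> Xh\<close>, and the embedding
  \<open>c \<mapsto> (c, 0)\<close> of \<open>W\<close> carries a path of length at most \<open>d\<close> from \<open>c\<close> to \<open>a\<close> in the graph on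
  \<open>Xh\<close> to a path from \<open>(c, 0)\<close> to \<open>(a, 0)\<close>.\<close>

lemma refl_linear: "linear (refl \<alpha>)"
  unfolding refl_def
  by (intro linearI) (simp_all add: inner_add_left algebra_simps add_divide_distrib)

lemma refl_refl: "\<alpha> \<noteq> 0 \<Longrightarrow> refl \<alpha> (refl \<alpha> v) = v"
  unfolding refl_def by (simp add: inner_diff_left algebra_simps field_simps)

lemma inner_refl_self: "\<alpha> \<noteq> 0 \<Longrightarrow> refl \<alpha> v \<bullet> refl \<alpha> v = v \<bullet> v"
  unfolding refl_def
  by (simp add: inner_diff_left inner_diff_right inner_commute algebra_simps power2_eq_square)

lemma refl_coroot: "\<alpha> \<noteq> 0 \<Longrightarrow> refl \<alpha> (coroot \<beta>) = coroot (refl \<alpha> \<beta>)"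
  unfolding coroot_def by (simp add: inner_refl_self linear_cmul[OF refl_linear])

lemma root_system_nonzero: "root_system \<Phi> \<Longrightarrow> \<alpha> \<in> \<Phi> \<Longrightarrow> \<alpha> \<noteq> 0"
  unfolding root_system_def by blast

lemma root_system_refl_closed: "root_system \<Phi> \<Longrightarrow> \<alpha> \<in> \<Phi> \<Longrightarrow> \<beta> \<in> \<Phi> \<Longrightarrow> refl \<alpha> \<beta> \<in> \<Phi>"
  unfolding root_system_def by blast

lemma weyl_group_linear: "s \<in> weyl_group \<Phi> \<Longrightarrow> linear s"
  by (induction rule: weyl_group.induct) (blast intro: linear_id linear_compose refl_linear)+

lemma weyl_group_comp_closed:
  "s \<in> weyl_group \<Phi> \<Longrightarrow> t \<in> weyl_group \<Phi> \<Longrightarrow> s \<circ> t \<in> weyl_group \<Phi>"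
  by (induction rule: weyl_group.induct) (auto simp: comp_assoc intro: weyl_group.step)

lemma weyl_group_right_inverse:
  assumes "root_system \<Phi>"
  shows "s \<in> weyl_group \<Phi> \<Longrightarrow> \<exists>t\<in>weyl_group \<Phi>. s \<circ> t = id"
proof (induction rule: weyl_group.induct)
  case id
  show ?case by (meson comp_id weyl_group.id)
next
  case (step s \<alpha>)
  then obtain t where t: "t \<in> weyl_group \<Phi>" "s \<circ> t = id" by blast
  have "refl \<alpha> \<in> weyl_group \<Phi>"
    using weyl_group.step[OF weyl_group.id step.hyps(2)] by simp
  then have "t \<circ> refl \<alpha> \<in> weyl_group \<Phi>" using t(1) by (rule weyl_group_comp_closed[rotated])
  moreover have "(refl \<alpha> \<circ> s) \<circ> (t \<circ> refl \<alpha>) = id"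
    using t(2) refl_refl[OF root_system_nonzero[OF assms step.hyps(2)]]
    by (simp add: fun_eq_iff)
  ultimately show ?case by blast
qed

definition weyl_grp :: "'v::euclidean_space set \<Rightarrow> ('v \<Rightarrow> 'v) monoid" where
  "weyl_grp \<Phi> = \<lparr>carrier = weyl_group \<Phi>, mult = wmult, one = id\<rparr>"

lemma carrier_weyl_grp: "carrier (weyl_grp \<Phi>) = weyl_group \<Phi>"
  and mult_weyl_grp: "mult (weyl_grp \<Phi>) = wmult"
  and one_weyl_grp: "one (weyl_grp \<Phi>) = id"
  by (simp_all add: weyl_grp_def)

(* Not [simp]: the simp rules of the group locale are stated in terms of carrier and mult. *)
lemmas weyl_grp_simps = carrier_weyl_grp mult_weyl_grp one_weyl_grp

lemma group_weyl_grp: "root_system \<Phi> \<Longrightarrow> group (weyl_grp \<Phi>)"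
  unfolding weyl_grp_def
  by (rule groupI)
    (auto simp: wmult_def weyl_group_comp_closed weyl_group.id o_assoc
      dest: weyl_group_right_inverse)

lemma coroot_lattice_zero: "0 \<in> coroot_lattice \<Phi>"
  unfolding coroot_lattice_def by (auto intro: exI[of _ "\<lambda>_. 0"])

lemma coroot_lattice_add:
  assumes "u \<in> coroot_lattice \<Phi>" "v \<in> coroot_lattice \<Phi>"
  shows "u + v \<in> coroot_lattice \<Phi>"
proof -
  obtain c c' where "u = (\<Sum>\<alpha>\<in>\<Phi>. of_int (c \<alpha>) *\<^sub>R coroot \<alpha>)" "v = (\<Sum>\<alpha>\<in>\<Phi>. of_int (c' \<alpha>) *\<^sub>R coroot \<alpha>)"
    using assms unfolding coroot_lattice_def by blast
  then have "u + v = (\<Sum>\<alpha>\<in>\<Phi>. of_int (c \<alpha> + c' \<alpha>) *\<^sub>R coroot \<alpha>)"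
    by (simp add: sum.distrib scaleR_add_left)
  then show ?thesis unfolding coroot_lattice_def mem_Collect_eq by (rule exI[of _ "\<lambda>\<alpha>. c \<alpha> + c' \<alpha>"])
qed

lemma coroot_lattice_uminus:
  assumes "u \<in> coroot_lattice \<Phi>"
  shows "- u \<in> coroot_lattice \<Phi>"
proof -
  obtain c where "u = (\<Sum>\<alpha>\<in>\<Phi>. of_int (c \<alpha>) *\<^sub>R coroot \<alpha>)"
    using assms unfolding coroot_lattice_def by blast
  then have "- u = (\<Sum>\<alpha>\<in>\<Phi>. of_int (- c \<alpha>) *\<^sub>R coroot \<alpha>)"
    by (simp add: sum_negf)
  then show ?thesis unfolding coroot_lattice_def mem_Collect_eq by (rule exI[of _ "\<lambda>\<alpha>. - c \<alpha>"])
qed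

lemma refl_coroot_lattice:
  assumes R: "root_system \<Phi>" and \<alpha>: "\<alpha> \<in> \<Phi>" and u: "u \<in> coroot_lattice \<Phi>"
  shows "refl \<alpha> u \<in> coroot_lattice \<Phi>"
proof -
  have \<alpha>0: "\<alpha> \<noteq> 0" using root_system_nonzero[OF R \<alpha>] .
  obtain c where c: "u = (\<Sum>\<beta>\<in>\<Phi>. of_int (c \<beta>) *\<^sub>R coroot \<beta>)"
    using u unfolding coroot_lattice_def by blast
  have bij: "bij_betw (refl \<alpha>) \<Phi> \<Phi>"
    by (rule bij_betw_byWitness[where f'="refl \<alpha>"])
      (auto simp: refl_refl[OF \<alpha>0] root_system_refl_closed[OF R \<alpha>])
  have "refl \<alpha> u = (\<Sum>\<beta>\<in>\<Phi>. of_int (c \<beta>) *\<^sub>R coroot (refl \<alpha> \<beta>))"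
    unfolding c
    by (simp add: linear_sum[OF refl_linear] linear_cmul[OF refl_linear] refl_coroot[OF \<alpha>0])
  also have "\<dots> = (\<Sum>\<gamma>\<in>\<Phi>. of_int (c (refl \<alpha> \<gamma>)) *\<^sub>R coroot \<gamma>)"
    using sum.reindex_bij_betw[OF bij, of "\<lambda>\<gamma>. of_int (c (refl \<alpha> \<gamma>)) *\<^sub>R coroot \<gamma>"]
    by (simp add: refl_refl[OF \<alpha>0])
  finally show ?thesis
    unfolding coroot_lattice_def mem_Collect_eq by (rule exI[of _ "\<lambda>\<gamma>. c (refl \<alpha> \<gamma>)"])
qed

lemma weyl_group_coroot_lattice:
  assumes "root_system \<Phi>"
  shows "s \<in> weyl_group \<Phi> \<Longrightarrow> u \<in> coroot_lattice \<Phi> \<Longrightarrow> s u \<in> coroot_lattice \<Phi>"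
  by (induction arbitrary: u rule: weyl_group.induct) (simp_all add: refl_coroot_lattice[OF assms])

definition aff_weyl_grp :: "'v::euclidean_space set \<Rightarrow> (('v \<Rightarrow> 'v) \<times> 'v) monoid" where
  "aff_weyl_grp \<Phi> = \<lparr>carrier = aff_weyl \<Phi>, mult = amult, one = (id, 0)\<rparr>"

lemma carrier_aff_weyl_grp: "carrier (aff_weyl_grp \<Phi>) = aff_weyl \<Phi>"
  and mult_aff_weyl_grp: "mult (aff_weyl_grp \<Phi>) = amult"
  and one_aff_weyl_grp: "one (aff_weyl_grp \<Phi>) = (id, 0)"
  by (simp_all add: aff_weyl_grp_def)

lemmas aff_weyl_grp_simps = carrier_aff_weyl_grp mult_aff_weyl_grp one_aff_weyl_grp

lemma group_aff_weyl_grp: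
  assumes R: "root_system \<Phi>"
  shows "group (aff_weyl_grp \<Phi>)"
proof (rule groupI)
  interpret W: group "weyl_grp \<Phi>" using group_weyl_grp[OF R] .
  fix x assume "x \<in> carrier (aff_weyl_grp \<Phi>)"
  then obtain s u where x: "x = (s, u)" and s: "s \<in> weyl_group \<Phi>" and u: "u \<in> coroot_lattice \<Phi>"
    by (auto simp: aff_weyl_def carrier_aff_weyl_grp)
  define t where "t = inv\<^bsub>weyl_grp \<Phi>\<^esub> s"
  have t: "t \<in> weyl_group \<Phi>" "s \<circ> t = id"
    using W.l_inv[of s] W.inv_closed[of s] s by (simp_all add: t_def wmult_def weyl_grp_simps)
  have "(t, - t u) \<in> aff_weyl \<Phi>"
    using t(1) u by (simp add: aff_weyl_def coroot_lattice_uminus weyl_group_coroot_lattice[OF R])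
  moreover have "amult (t, - t u) x = (id, 0)"
    using t s x by (simp add: amult_def wmult_def linear_neg weyl_group_linear pointfree_idE)
  ultimately show "\<exists>y\<in>carrier (aff_weyl_grp \<Phi>). y \<otimes>\<^bsub>aff_weyl_grp \<Phi>\<^esub> x = \<one>\<^bsub>aff_weyl_grp \<Phi>\<^esub>"
    by (auto simp: aff_weyl_grp_simps)
qed (auto simp: aff_weyl_grp_simps aff_weyl_def amult_def wmult_def linear_0 weyl_group_linear
      weyl_group_linear[THEN linear_add] weyl_group.id weyl_group_comp_closed
      weyl_group_coroot_lattice[OF R] coroot_lattice_zero coroot_lattice_add)

lemma fst_in_hom_aff_weyl_grp: "fst \<in> hom (aff_weyl_grp \<Phi>) (weyl_grp \<Phi>)"
  unfolding hom_def by (auto simp: aff_weyl_def amult_def aff_weyl_grp_simps weyl_grp_simps)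

lemma pair_zero_in_hom_aff_weyl_grp: "(\<lambda>s. (s, 0)) \<in> hom (weyl_grp \<Phi>) (aff_weyl_grp \<Phi>)"
  unfolding hom_def
  by (auto simp: aff_weyl_grp_simps weyl_grp_simps aff_weyl_def amult_def wmult_def linear_0
      weyl_group_linear weyl_group_comp_closed coroot_lattice_zero)

lemma cg_walk_hom:
  assumes h: "h \<in> hom G H" and X: "X \<subseteq> carrier G" and Y: "h ` X \<subseteq> Y"
    and w: "cg_walk (mult G) X x y n"
  shows "cg_walk (mult H) Y (h x) (h y) n"
proof -
  obtain xs where xs: "length xs = Suc n" "set xs \<subseteq> X" "hd xs = x" "last xs = y"
    "\<forall>i<n. xs ! i \<otimes>\<^bsub>G\<^esub> xs ! Suc i = xs ! Suc i \<otimes>\<^bsub>G\<^esub> xs ! i"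
    using w unfolding cg_walk_def by blast
  have xs_carrier: "xs ! j \<in> carrier G" if "j \<le> n" for j
  proof -
    have "xs ! j \<in> set xs" using that xs(1) by simp
    then show ?thesis using xs(2) X by blast
  qed
  have "h (xs ! i) \<otimes>\<^bsub>H\<^esub> h (xs ! Suc i) = h (xs ! Suc i) \<otimes>\<^bsub>H\<^esub> h (xs ! i)" if "i < n" for i
  proof -
    have xi: "xs ! i \<in> carrier G" and xsi: "xs ! Suc i \<in> carrier G"
      using that xs_carrier by auto
    have "h (xs ! i) \<otimes>\<^bsub>H\<^esub> h (xs ! Suc i) = h (xs ! i \<otimes>\<^bsub>G\<^esub> xs ! Suc i)"
      using hom_mult[OF h xi xsi] by simp
    also have "\<dots> = h (xs ! Suc i \<otimes>\<^bsub>G\<^esub> xs ! i)" using xs(5) that by simp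
    also have "\<dots> = h (xs ! Suc i) \<otimes>\<^bsub>H\<^esub> h (xs ! i)" using hom_mult[OF h xsi xi] .
    finally show ?thesis .
  qed
  moreover have "xs \<noteq> []" using xs(1) by auto
  moreover have "set (map h xs) \<subseteq> Y" using xs(2) Y by auto
  ultimately show ?thesis
    unfolding cg_walk_def using xs
    by (intro exI[of _ "map h xs"]) (auto simp: hd_map last_map)
qed

lemma cg_walk_append:
  assumes w1: "cg_walk m X x y n1" and w2: "cg_walk m X y z n2"
  shows "cg_walk m X x z (n1 + n2)"
proof -
  obtain xs where xs: "length xs = Suc n1" "set xs \<subseteq> X" "hd xs = x" "last xs = y"
    "\<forall>i<n1. m (xs ! i) (xs ! Suc i) = m (xs ! Suc i) (xs ! i)"
    using w1 unfolding cg_walk_def by blast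
  obtain ys where ys: "length ys = Suc n2" "set ys \<subseteq> X" "hd ys = y" "last ys = z"
    "\<forall>i<n2. m (ys ! i) (ys ! Suc i) = m (ys ! Suc i) (ys ! i)"
    using w2 unfolding cg_walk_def by blast
  define zs where "zs = xs @ tl ys"
  have ys_Cons: "ys = y # tl ys" using ys(1,3) by (cases ys) auto
  have zs_low: "zs ! i = xs ! i" if "i \<le> n1" for i
    using that xs(1) by (simp add: zs_def nth_append)
  have zs_high: "zs ! i = ys ! (i - n1)" if "n1 \<le> i" for i
  proof (cases "i = n1")
    case True
    have "xs \<noteq> []" using xs(1) by auto
    then have "xs ! n1 = y" using xs(1,4) by (simp add: last_conv_nth)
    moreover have "ys ! 0 = y" by (subst ys_Cons) simp
    ultimately show ?thesis using True zs_low[of n1] by simp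
  next
    case False
    then have "ys ! (i - n1) = tl ys ! (i - Suc n1)"
      using that by (subst ys_Cons) (simp add: nth_Cons')
    then show ?thesis using that False xs(1) by (simp add: zs_def nth_append)
  qed
  have "m (zs ! i) (zs ! Suc i) = m (zs ! Suc i) (zs ! i)" if "i < n1 + n2" for i
  proof (cases "i < n1")
    case True
    then show ?thesis using zs_low[of i] zs_low[of "Suc i"] xs(5) by simp
  next
    case False
    then show ?thesis using zs_high[of i] zs_high[of "Suc i"] ys(5) that
      by (simp add: Suc_diff_le)
  qed
  moreover have "length zs = Suc (n1 + n2)" using xs(1) ys(1) by (simp add: zs_def)
  moreover have "set zs \<subseteq> X"
    using xs(2) ys(2) set_subset_Cons[of "tl ys" y] ys_Cons by (auto simp: zs_def)
  moreover have "hd zs = x" using xs(1,3) by (cases xs) (auto simp: zs_def)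
  moreover have "last zs = z"
    using xs(4) ys(3,4) ys_Cons by (cases "tl ys") (auto simp: zs_def)
  ultimately show ?thesis unfolding cg_walk_def by blast
qed

lemma cg_dist_le_enat_iff: "cg_dist m X x y \<le> enat n \<longleftrightarrow> (\<exists>l\<le>n. cg_walk m X x y l)"
proof
  assume le: "cg_dist m X x y \<le> enat n"
  show "\<exists>l\<le>n. cg_walk m X x y l"
  proof (rule ccontr)
    assume none: "\<not> (\<exists>l\<le>n. cg_walk m X x y l)"
    have "enat (Suc n) \<le> cg_dist m X x y"
      unfolding cg_dist_def
    proof (rule INF_greatest)
      fix l assume "l \<in> {l. cg_walk m X x y l}"
      then have "\<not> l \<le> n" using none by blast
      then show "enat (Suc n) \<le> enat l" by simp
    qed
    then have "enat (Suc n) \<le> enat n" using le by (rule order_trans)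
    then show False by simp
  qed
next
  assume "\<exists>l\<le>n. cg_walk m X x y l"
  then show "cg_dist m X x y \<le> enat n"
    unfolding cg_dist_def by (auto intro: INF_lower2)
qed

lemma cg_dist_le_diameter: "x \<in> X \<Longrightarrow> y \<in> X \<Longrightarrow> cg_dist m X x y \<le> cg_diameter m X"
  unfolding cg_diameter_def by (rule SUP_upper2[where i = x]) (auto intro: SUP_upper)

lemma cg_connected_diameter_le:
  assumes "\<And>x y. x \<in> X \<Longrightarrow> y \<in> X \<Longrightarrow> cg_dist m X x y \<le> enat n"
  shows "cg_connected m X \<and> cg_diameter m X \<le> enat n"
  using assms unfolding cg_connected_def cg_diameter_def
  by (auto intro!: SUP_least dest: enat_ile)

lemma conj_class_hom_image:
  assumes h: "h \<in> hom G H" and x: "x \<in> carrier G" and y: "y \<in> conj_class (carrier G) (mult G) x"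
  shows "h y \<in> conj_class (carrier H) (mult H) (h x)"
proof -
  obtain g where g: "g \<in> carrier G" "g \<otimes>\<^bsub>G\<^esub> y = x \<otimes>\<^bsub>G\<^esub> g" and yG: "y \<in> carrier G"
    using y unfolding conj_class_def by blast
  then have "h g \<otimes>\<^bsub>H\<^esub> h y = h x \<otimes>\<^bsub>H\<^esub> h g" using h x by (metis hom_mult)
  then show ?thesis using g(1) yG h unfolding conj_class_def by (auto intro: hom_in_carrier)
qed

context group
begin

lemma conj_class_iff:
  assumes "x \<in> carrier G"
  shows "y \<in> conj_class (carrier G) (\<otimes>) x \<longleftrightarrow> (\<exists>g\<in>carrier G. y = inv g \<otimes> x \<otimes> g)"
proof -
  have "g \<otimes> y = x \<otimes> g \<longleftrightarrow> y = inv g \<otimes> x \<otimes> g" if "g \<in> carrier G" "y \<in> carrier G" for g y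
    using that assms inv_solve_left[of y g "x \<otimes> g"] by (auto simp: m_assoc)
  then show ?thesis using assms unfolding conj_class_def by auto
qed

lemma conj_class_self: "x \<in> carrier G \<Longrightarrow> x \<in> conj_class (carrier G) (\<otimes>) x"
  unfolding conj_class_def by force

lemma inv_mult_cancel_left [simp]:
  "x \<in> carrier G \<Longrightarrow> y \<in> carrier G \<Longrightarrow> inv x \<otimes> (x \<otimes> y) = y"
  by (simp add: m_assoc[symmetric])

lemma mult_inv_cancel_left [simp]:
  "x \<in> carrier G \<Longrightarrow> y \<in> carrier G \<Longrightarrow> x \<otimes> (inv x \<otimes> y) = y"
  by (simp add: m_assoc[symmetric])

lemma conj_class_conj_closed:
  assumes x: "x \<in> carrier G" and y: "y \<in> conj_class (carrier G) (\<otimes>) x"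
    and g: "g \<in> carrier G"
  shows "inv g \<otimes> y \<otimes> g \<in> conj_class (carrier G) (\<otimes>) x"
proof -
  obtain h where h: "h \<in> carrier G" "h \<otimes> y = x \<otimes> h" and yG: "y \<in> carrier G"
    using y unfolding conj_class_def by blast
  have "h \<otimes> y \<otimes> g = x \<otimes> h \<otimes> g" using h(2) by simp
  then have "h \<otimes> g \<otimes> (inv g \<otimes> y \<otimes> g) = x \<otimes> (h \<otimes> g)"
    using x h(1) yG g by (simp add: m_assoc)
  then show ?thesis using h(1) yG g unfolding conj_class_def by blast
qed

lemma conj_in_hom: "g \<in> carrier G \<Longrightarrow> (\<lambda>z. inv g \<otimes> z \<otimes> g) \<in> hom G G"
  unfolding hom_def by (simp add: m_assoc)

lemma cg_walk_conj:
  assumes "g \<in> carrier G" and "x0 \<in> carrier G" and "cg_walk (\<otimes>) (conj_class (carrier G) (\<otimes>) x0) x y n"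
  shows "cg_walk (\<otimes>) (conj_class (carrier G) (\<otimes>) x0) (inv g \<otimes> x \<otimes> g) (inv g \<otimes> y \<otimes> g) n"
proof (rule cg_walk_hom[OF conj_in_hom[OF assms(1)] _ _ assms(3)])
  show "conj_class (carrier G) (\<otimes>) x0 \<subseteq> carrier G"
    unfolding conj_class_def by blast
  show "(\<lambda>z. inv g \<otimes> z \<otimes> g) ` conj_class (carrier G) (\<otimes>) x0 \<subseteq> conj_class (carrier G) (\<otimes>) x0"
    using conj_class_conj_closed assms(1,2) by blast
qed

lemma conj_class_cg_diameter_le:
  assumes x0: "x0 \<in> carrier G" and X: "X = conj_class (carrier G) (\<otimes>) x0"
    and base: "\<And>z. z \<in> X \<Longrightarrow> cg_dist (\<otimes>) X z x0 \<le> enat n"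
  shows "cg_connected (\<otimes>) X \<and> cg_diameter (\<otimes>) X \<le> enat n"
proof (rule cg_connected_diameter_le)
  fix x y assume x: "x \<in> X" and y: "y \<in> X"
  obtain g where g: "g \<in> carrier G" and y_eq: "y = inv g \<otimes> x0 \<otimes> g"
    using y conj_class_iff[OF x0, of y] unfolding X by blast
  have xG: "x \<in> carrier G" using x unfolding X conj_class_def by blast
  have "inv (inv g) \<otimes> x \<otimes> inv g \<in> X"
    using conj_class_conj_closed[OF x0, of x "inv g"] x g unfolding X by simp
  then have "g \<otimes> x \<otimes> inv g \<in> X" using g by simp
  then have "cg_dist (\<otimes>) X (g \<otimes> x \<otimes> inv g) x0 \<le> enat n" by (rule base)
  then obtain l where l: "l \<le> n" "cg_walk (\<otimes>) X (g \<otimes> x \<otimes> inv g) x0 l"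
    unfolding cg_dist_le_enat_iff by blast
  then have "cg_walk (\<otimes>) X (inv g \<otimes> (g \<otimes> x \<otimes> inv g) \<otimes> g) (inv g \<otimes> x0 \<otimes> g) l"
    using cg_walk_conj[OF g x0] unfolding X by blast
  moreover have "inv g \<otimes> (g \<otimes> x \<otimes> inv g) \<otimes> g = x"
    using g xG by (simp add: m_assoc)
  ultimately have "cg_walk (\<otimes>) X x y l" unfolding y_eq by simp
  then show "cg_dist (\<otimes>) X x y \<le> enat n" unfolding cg_dist_le_enat_iff using l(1) by blast
qed

end

locale aff_weyl_conj_classes =
  fixes \<Phi> :: "'v::euclidean_space set" and a :: "'v \<Rightarrow> 'v" and X Xh
  assumes root_system: "root_system \<Phi>" and a_in_weyl_group: "a \<in> weyl_group \<Phi>"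
    and X_eq: "X = conj_class (aff_weyl \<Phi>) amult (a, 0)"
    and Xh_eq: "Xh = conj_class (weyl_group \<Phi>) wmult a"
begin

sublocale W: group "weyl_grp \<Phi>"
  by (rule group_weyl_grp[OF root_system])

sublocale A: group "aff_weyl_grp \<Phi>"
  by (rule group_aff_weyl_grp[OF root_system])

sublocale lift: group_hom "weyl_grp \<Phi>" "aff_weyl_grp \<Phi>" "\<lambda>s. (s, 0)"
  by unfold_locales (rule pair_zero_in_hom_aff_weyl_grp)

sublocale proj: group_hom "aff_weyl_grp \<Phi>" "weyl_grp \<Phi>" fst
  by unfold_locales (rule fst_in_hom_aff_weyl_grp)

lemma a_in_carrier: "a \<in> carrier (weyl_grp \<Phi>)"
  using a_in_weyl_group by (simp add: carrier_weyl_grp)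

lemma X_conj_class: "X = conj_class (carrier (aff_weyl_grp \<Phi>)) (\<otimes>\<^bsub>aff_weyl_grp \<Phi>\<^esub>) (a, 0)"
  by (simp add: X_eq aff_weyl_grp_simps)

lemma Xh_conj_class: "Xh = conj_class (carrier (weyl_grp \<Phi>)) (\<otimes>\<^bsub>weyl_grp \<Phi>\<^esub>) a"
  by (simp add: Xh_eq weyl_grp_simps)

lemma cg_walk_lift:
  assumes "cg_walk wmult Xh b c n"
  shows "cg_walk amult X (b, 0) (c, 0) n"
proof -
  have "(\<lambda>s. (s, 0)) ` Xh \<subseteq> X"
    using conj_class_hom_image[OF pair_zero_in_hom_aff_weyl_grp a_in_carrier]
    unfolding X_conj_class Xh_conj_class by auto
  moreover have "Xh \<subseteq> carrier (weyl_grp \<Phi>)"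
    unfolding Xh_conj_class conj_class_def by auto
  ultimately show ?thesis
    using cg_walk_hom[OF pair_zero_in_hom_aff_weyl_grp] assms
    unfolding mult_weyl_grp mult_aff_weyl_grp by blast
qed

lemma pair_a_zero_in_carrier: "(a, 0) \<in> carrier (aff_weyl_grp \<Phi>)"
  using lift.hom_closed[OF a_in_carrier] .

lemma X_subset_carrier: "X \<subseteq> carrier (aff_weyl_grp \<Phi>)"
  unfolding X_conj_class conj_class_def by blast

lemma conj_fst_eq_aE:
  assumes z: "z \<in> X"
  obtains s where "s \<in> carrier (weyl_grp \<Phi>)"
    and "fst ((s, 0) \<otimes>\<^bsub>aff_weyl_grp \<Phi>\<^esub> z \<otimes>\<^bsub>aff_weyl_grp \<Phi>\<^esub> inv\<^bsub>aff_weyl_grp \<Phi>\<^esub> (s, 0)) = a"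
proof -
  have "fst z \<in> Xh"
    using conj_class_hom_image[OF fst_in_hom_aff_weyl_grp pair_a_zero_in_carrier] z
    unfolding X_conj_class Xh_conj_class by simp
  then obtain s where s: "s \<in> carrier (weyl_grp \<Phi>)"
    and fst_z: "fst z = inv\<^bsub>weyl_grp \<Phi>\<^esub> s \<otimes>\<^bsub>weyl_grp \<Phi>\<^esub> a \<otimes>\<^bsub>weyl_grp \<Phi>\<^esub> s"
    using W.conj_class_iff[OF a_in_carrier] unfolding Xh_conj_class by blast
  have "fst ((s, 0) \<otimes>\<^bsub>aff_weyl_grp \<Phi>\<^esub> z \<otimes>\<^bsub>aff_weyl_grp \<Phi>\<^esub> inv\<^bsub>aff_weyl_grp \<Phi>\<^esub> (s, 0))
      = s \<otimes>\<^bsub>weyl_grp \<Phi>\<^esub> fst z \<otimes>\<^bsub>weyl_grp \<Phi>\<^esub> inv\<^bsub>weyl_grp \<Phi>\<^esub> s"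
    using lift.hom_closed[OF s] z X_subset_carrier by (auto simp: proj.hom_mult)
  also have "\<dots> = a" using s a_in_carrier unfolding fst_z by (simp add: W.m_assoc)
  finally show thesis using that s by blast
qed

lemma cg_dist_lift_le:
  assumes near: "\<forall>u. (a, u) \<in> X \<longrightarrow> (\<exists>xh\<in>Xh. cg_dist amult X (a, u) (xh, 0) \<le> enat k)"
    and z: "z \<in> X"
  shows "\<exists>c\<in>Xh. cg_dist amult X z (c, 0) \<le> enat k"
proof -
  obtain s where s: "s \<in> carrier (weyl_grp \<Phi>)"
    and fst_z': "fst ((s, 0) \<otimes>\<^bsub>aff_weyl_grp \<Phi>\<^esub> z \<otimes>\<^bsub>aff_weyl_grp \<Phi>\<^esub> inv\<^bsub>aff_weyl_grp \<Phi>\<^esub> (s, 0)) = a"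
    using conj_fst_eq_aE[OF z] .
  define t where "t = (s, 0 :: 'v)"
  have tA: "t \<in> carrier (aff_weyl_grp \<Phi>)" using lift.hom_closed[OF s] unfolding t_def .
  define z' where "z' = t \<otimes>\<^bsub>aff_weyl_grp \<Phi>\<^esub> z \<otimes>\<^bsub>aff_weyl_grp \<Phi>\<^esub> inv\<^bsub>aff_weyl_grp \<Phi>\<^esub> t"
  have "z' \<in> X"
    using A.conj_class_conj_closed[OF pair_a_zero_in_carrier _ A.inv_closed[OF tA]] z tA
    unfolding z'_def X_conj_class by simp
  then obtain xh where xh: "xh \<in> Xh" "cg_dist amult X z' (xh, 0) \<le> enat k"
    using near fst_z' prod.collapse[of z'] unfolding z'_def t_def by metis
  then obtain l where l: "l \<le> k" "cg_walk amult X z' (xh, 0) l"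
    unfolding cg_dist_le_enat_iff by blast
  have xhW: "xh \<in> carrier (weyl_grp \<Phi>)" using xh(1) unfolding Xh_conj_class conj_class_def by simp
  define c where "c = inv\<^bsub>weyl_grp \<Phi>\<^esub> s \<otimes>\<^bsub>weyl_grp \<Phi>\<^esub> xh \<otimes>\<^bsub>weyl_grp \<Phi>\<^esub> s"
  have "cg_walk amult X
      (inv\<^bsub>aff_weyl_grp \<Phi>\<^esub> t \<otimes>\<^bsub>aff_weyl_grp \<Phi>\<^esub> z' \<otimes>\<^bsub>aff_weyl_grp \<Phi>\<^esub> t)
      (inv\<^bsub>aff_weyl_grp \<Phi>\<^esub> t \<otimes>\<^bsub>aff_weyl_grp \<Phi>\<^esub> (xh, 0) \<otimes>\<^bsub>aff_weyl_grp \<Phi>\<^esub> t) l"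
    using A.cg_walk_conj[OF tA pair_a_zero_in_carrier] l(2)
    unfolding X_conj_class mult_aff_weyl_grp .
  moreover have "inv\<^bsub>aff_weyl_grp \<Phi>\<^esub> t \<otimes>\<^bsub>aff_weyl_grp \<Phi>\<^esub> z' \<otimes>\<^bsub>aff_weyl_grp \<Phi>\<^esub> t = z"
    using tA z X_subset_carrier unfolding z'_def by (auto simp: A.m_assoc)
  moreover have "inv\<^bsub>aff_weyl_grp \<Phi>\<^esub> t \<otimes>\<^bsub>aff_weyl_grp \<Phi>\<^esub> (xh, 0) \<otimes>\<^bsub>aff_weyl_grp \<Phi>\<^esub> t = (c, 0)"
    using s xhW unfolding c_def t_def by (simp add: lift.hom_mult)
  ultimately have "cg_walk amult X z (c, 0) l" by simp
  moreover have "c \<in> Xh"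
    using W.conj_class_conj_closed[OF a_in_carrier _ s] xh(1) unfolding c_def Xh_conj_class .
  ultimately show ?thesis using l(1) unfolding cg_dist_le_enat_iff by blast
qed

lemma cg_dist_base_le:
  assumes diam: "cg_diameter wmult Xh = enat d"
    and near: "\<forall>u. (a, u) \<in> X \<longrightarrow> (\<exists>xh\<in>Xh. cg_dist amult X (a, u) (xh, 0) \<le> enat k)"
    and z: "z \<in> X"
  shows "cg_dist amult X z (a, 0) \<le> enat (d + k)"
proof -
  obtain c where c: "c \<in> Xh" "cg_dist amult X z (c, 0) \<le> enat k"
    using cg_dist_lift_le[OF near z] by blast
  then obtain l1 where l1: "l1 \<le> k" "cg_walk amult X z (c, 0) l1"
    unfolding cg_dist_le_enat_iff by blast
  have "a \<in> Xh" unfolding Xh_conj_class by (rule W.conj_class_self[OF a_in_carrier])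
  then have "cg_dist wmult Xh c a \<le> enat d"
    using cg_dist_le_diameter[OF c(1)] diam by metis
  then obtain l2 where l2: "l2 \<le> d" "cg_walk wmult Xh c a l2"
    unfolding cg_dist_le_enat_iff by blast
  have "cg_walk amult X z (a, 0) (l1 + l2)"
    using cg_walk_append[OF l1(2) cg_walk_lift[OF l2(2)]] .
  then show ?thesis
    using l1(1) l2(1) unfolding cg_dist_le_enat_iff by (intro exI[of _ "l1 + l2"]) auto
qed

end

theorem proposition2p7:
  fixes \<Phi> :: "'v::euclidean_space set"
    and a :: "'v \<Rightarrow> 'v" and d k :: nat
  assumes "root_system \<Phi>"
    and "involution (weyl_group \<Phi>) wmult id a"
    and "X = conj_class (aff_weyl \<Phi>) amult (a, 0)"
    and "Xh = conj_class (weyl_group \<Phi>) wmult a"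
    and "cg_connected wmult Xh" and "cg_diameter wmult Xh = enat d"
    and "\<forall>u. (a, u) \<in> X \<longrightarrow> (\<exists>xh\<in>Xh. cg_dist amult X (a, u) (xh, 0) \<le> enat k)"
  shows "cg_connected amult X \<and> cg_diameter amult X \<le> enat (d + k)"
proof -
  interpret aff_weyl_conj_classes \<Phi> a X Xh
    using assms(1-4) unfolding involution_def by unfold_locales blast+
  have "z \<in> X \<Longrightarrow> cg_dist (\<otimes>\<^bsub>aff_weyl_grp \<Phi>\<^esub>) X z (a, 0) \<le> enat (d + k)" for z
    using cg_dist_base_le[OF assms(6,7)] by (simp add: mult_aff_weyl_grp)
  from A.conj_class_cg_diameter_le[OF pair_a_zero_in_carrier X_conj_class this]
  show ?thesis unfolding mult_aff_weyl_grp .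
qed

end
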